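(* In the setting of MP (two-stage mini-pooling) with quantitative assays subject to multiplicative measurement error, the sensitivity of MP satisfies $\mathrm{SENS}_{\mathrm{IND}}^2\le\mathrm{SENS}_{\mathrm{MP}}\le\mathrm{SENS}_{\mathrm{IND}}$, where: for cutoff $C>0$ and pool size $K\ge2$, individuals have true values $V_j\ge0$ (failure iff $V_j>C$) and measured values $\widetilde V_j=V_j\varepsilon_j$, the pool has measured total $\widetilde T_1=\varepsilon_{\mathrm{pool}}\sum_{j=1}^KV_j$, the errors $\varepsilon_1,\dots,\varepsilon_K,\varepsilon_{\mathrm{pool}}$ are i.i.d. with $\varepsilon\overset{d}{=}\varepsilon^{-1}$ and independent of the $V$'s; $\mathrm{SENS}_{\mathrm{IND}}=\Pr(\widetilde V_k>C\mid V_k>C)$ and $\mathrm{SENS}_{\mathrm{MP}}=\Pr(\widetilde T_1>C,\ \widetilde V_k>C\mid V_k>C)$.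
   Context: MP classifies individual $k$ positive iff the pool is positive ($\widetilde T_1>C$, i.e. measured pool value exceeds $C/K$) and the individual's own measured value exceeds $C$. Values $V_j$ are nonnegative. *)

theory Defs
  imports "HOL-Probability.Probability"
begin

text \<open>Two-stage mini-pooling (MP). Individuals are indexed by 0..K-1, the
  measurement errors eps 0 .. eps (K-1) belong to the individuals and eps K is
  the pool error.\<close>

definition sens_ind :: "'a measure \<Rightarrow> (nat \<Rightarrow> 'a \<Rightarrow> real) \<Rightarrow> (nat \<Rightarrow> 'a \<Rightarrow> real) \<Rightarrow> real \<Rightarrow> nat \<Rightarrow> real" where
  "sens_ind M V eps C k = \<P>(x in M. V k x * eps k x > C \<bar> V k x > C)"

definition sens_mp :: "'a measure \<Rightarrow> (nat \<Rightarrow> 'a \<Rightarrow> real) \<Rightarrow> (nat \<Rightarrow> 'a \<Rightarrow> real) \<Rightarrow> real \<Rightarrow> nat \<Rightarrow> nat \<Rightarrow> real" where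
  "sens_mp M V eps C K k =
     \<P>(x in M. eps K x * (\<Sum>j<K. V j x) > C \<and> V k x * eps k x > C \<bar> V k x > C)"

end

theory Submission
  imports Defs
begin

text \<open>Given the true values, the individual and pool errors are i.i.d. with law \<open>\<mu>\<close>, so with
  \<open>p(v) = \<mu>{e. v e > C}\<close> for \<open>v > C\<close> (and \<open>p(v) = 0\<close> otherwise) the probability that
  \<open>V\<^sub>k \<epsilon>\<^sub>k > C\<close> and \<open>V\<^sub>k > C\<close> is \<open>E p(V\<^sub>k)\<close>, while the probability that in addition
  \<open>V\<^sub>k \<epsilon>\<^sub>p\<^sub>o\<^sub>o\<^sub>l > C\<close> is \<open>E p(V\<^sub>k)\<^sup>2\<close>. Since \<open>V\<^sub>k\<close> is one of the nonnegative summands of the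
  pool, the latter event forces the pool to be positive, and Cauchy-Schwarz gives
  \<open>(E p(V\<^sub>k))\<^sup>2 \<le> E p(V\<^sub>k)\<^sup>2 \<cdot> P(V\<^sub>k > C)\<close>, i.e. \<open>SENS\<^sub>I\<^sub>N\<^sub>D\<^sup>2 \<le> SENS\<^sub>M\<^sub>P\<close>.
  The upper bound is monotonicity of conditional probability.\<close>

lemma (in prob_space) nn_integral_indep_var:
  assumes indep: "indep_var S X T Y" and h: "h \<in> borel_measurable (S \<Otimes>\<^sub>M T)"
  shows "(\<integral>\<^sup>+x. h (X x, Y x) \<partial>M) = (\<integral>\<^sup>+x. (\<integral>\<^sup>+\<omega>. h (\<omega>, Y x) \<partial>distr M S X) \<partial>M)"
proof -
  have X[measurable]: "X \<in> measurable M S" and Y[measurable]: "Y \<in> measurable M T"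
    and joint: "distr M S X \<Otimes>\<^sub>M distr M T Y = distr M (S \<Otimes>\<^sub>M T) (\<lambda>x. (X x, Y x))"
    using indep unfolding indep_var_distribution_eq by auto
  interpret XY: pair_prob_space "distr M S X" "distr M T Y"
    by (simp add: pair_prob_space_def pair_sigma_finite_def prob_space_distr prob_space_imp_sigma_finite)
  have h': "h \<in> borel_measurable (distr M S X \<Otimes>\<^sub>M distr M T Y)"
    using h by (simp add: measurable_cong_sets[OF sets_pair_measure_cong[OF sets_distr sets_distr]])
  have "(\<integral>\<^sup>+x. h (X x, Y x) \<partial>M) = integral\<^sup>N (distr M S X \<Otimes>\<^sub>M distr M T Y) h"
    by (simp add: joint nn_integral_distr h)
  also have "\<dots> = (\<integral>\<^sup>+y. (\<integral>\<^sup>+\<omega>. h (\<omega>, y) \<partial>distr M S X) \<partial>distr M T Y)"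
    by (rule XY.nn_integral_snd[symmetric, OF h'])
  also have "\<dots> = (\<integral>\<^sup>+x. (\<integral>\<^sup>+\<omega>. h (\<omega>, Y x) \<partial>distr M S X) \<partial>M)"
    using h' by (intro nn_integral_distr Y) simp
  finally show ?thesis .
qed

lemma nn_integral_PiM_prod_iid:
  assumes "prob_space \<mu>" "finite I" "S \<subseteq> I" "f \<in> borel_measurable \<mu>"
  shows "(\<integral>\<^sup>+\<omega>. (\<Prod>i\<in>S. f (\<omega> i)) \<partial>PiM I (\<lambda>_. \<mu>)) = (\<integral>\<^sup>+e. f e \<partial>\<mu>) ^ card S"
proof -
  interpret product_sigma_finite "\<lambda>_. \<mu>"
    by (simp add: product_sigma_finite_def prob_space_imp_sigma_finite assms(1))
  have "(\<integral>\<^sup>+\<omega>. (\<Prod>i\<in>S. f (\<omega> i)) \<partial>PiM I (\<lambda>_. \<mu>))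
      = (\<integral>\<^sup>+\<omega>. (\<Prod>i\<in>I. (\<lambda>e. if i \<in> S then f e else 1) (\<omega> i)) \<partial>PiM I (\<lambda>_. \<mu>))"
    using assms(2,3) by (simp add: prod.If_cases Int_absorb1 cong: prod.cong)
  also have "\<dots> = (\<Prod>i\<in>I. (\<integral>\<^sup>+e. (if i \<in> S then f e else 1) \<partial>\<mu>))"
    using assms(2,4) by (intro product_nn_integral_prod) auto
  also have "\<dots> = (\<Prod>i\<in>I. if i \<in> S then (\<integral>\<^sup>+e. f e \<partial>\<mu>) else 1)"
    using assms(1) by (intro prod.cong) (auto simp: prob_space.emeasure_space_1)
  also have "\<dots> = (\<integral>\<^sup>+e. f e \<partial>\<mu>) ^ card S"
    using assms(2,3) by (simp add: prod.If_cases Int_absorb1)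
  finally show ?thesis .
qed

lemma (in prob_space) distr_indep_vars_iid:
  assumes "I \<noteq> {}" "indep_vars (\<lambda>_. E) X I" "\<And>i. i \<in> I \<Longrightarrow> distr M E (X i) = \<mu>"
  shows "distr M (PiM I (\<lambda>_. E)) (\<lambda>x. \<lambda>i\<in>I. X i x) = PiM I (\<lambda>_. \<mu>)"
proof -
  have "distr M (PiM I (\<lambda>_. E)) (\<lambda>x. \<lambda>i\<in>I. X i x) = PiM I (\<lambda>i. distr M E (X i))"
    using assms(1,2) indep_vars_iff_distr_eq_PiM'[of I X "\<lambda>_. E"] by (auto simp: indep_vars_def)
  also have "\<dots> = PiM I (\<lambda>_. \<mu>)"
    using assms(3) by (intro PiM_cong) auto
  finally show ?thesis .
qed

lemma (in prob_space) nn_integral_prod_iid_indep: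
  assumes "finite I" "indep_vars (\<lambda>_. E) X I" "\<And>i. i \<in> I \<Longrightarrow> distr M E (X i) = \<mu>"
    and indep: "indep_var (PiM I (\<lambda>_. E)) (\<lambda>x. \<lambda>i\<in>I. X i x) N Y"
    and [measurable]: "(\<lambda>(e, y). f e y) \<in> borel_measurable (E \<Otimes>\<^sub>M N)"
    and "S \<subseteq> I"
  shows "(\<integral>\<^sup>+x. (\<Prod>i\<in>S. f (X i x) (Y x)) \<partial>M) = (\<integral>\<^sup>+x. (\<integral>\<^sup>+e. f e (Y x) \<partial>\<mu>) ^ card S \<partial>M)"
proof (cases "S = {}")
  case False
  then obtain a where "a \<in> I" using \<open>S \<subseteq> I\<close> by blast
  then have "\<mu> = distr M E (X a)" "random_variable E (X a)"
    using assms(2,3) by (auto simp: indep_vars_def)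
  then have \<mu>: "prob_space \<mu>" and sets_\<mu>: "sets \<mu> = sets E"
    by (simp_all add: prob_space_distr)
  define h where "h = (\<lambda>(\<omega>, y). \<Prod>i\<in>S. f (\<omega> i) y)"
  have [measurable]: "h \<in> borel_measurable (PiM I (\<lambda>_. E) \<Otimes>\<^sub>M N)"
    unfolding h_def by measurable (use \<open>S \<subseteq> I\<close> in auto)
  have "(\<integral>\<^sup>+x. (\<Prod>i\<in>S. f (X i x) (Y x)) \<partial>M) = (\<integral>\<^sup>+x. h (\<lambda>i\<in>I. X i x, Y x) \<partial>M)"
    using \<open>S \<subseteq> I\<close> by (auto simp: h_def subset_iff intro!: nn_integral_cong prod.cong)
  also have "\<dots> = (\<integral>\<^sup>+x. (\<integral>\<^sup>+\<omega>. h (\<omega>, Y x) \<partial>PiM I (\<lambda>_. \<mu>)) \<partial>M)"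
    using \<open>a \<in> I\<close> assms(2,3) by (subst distr_indep_vars_iid[symmetric]) (auto intro: nn_integral_indep_var[OF indep])
  also have "\<dots> = (\<integral>\<^sup>+x. (\<integral>\<^sup>+e. f e (Y x) \<partial>\<mu>) ^ card S \<partial>M)"
  proof (intro nn_integral_cong)
    fix x assume "x \<in> space M"
    then have "Y x \<in> space N"
      using indep_var_rv2[OF indep] by (simp add: measurable_space)
    then have f_Y: "(\<lambda>e. f e (Y x)) \<in> borel_measurable \<mu>"
      unfolding measurable_cong_sets[OF sets_\<mu> refl] by measurable
    show "(\<integral>\<^sup>+\<omega>. h (\<omega>, Y x) \<partial>PiM I (\<lambda>_. \<mu>)) = (\<integral>\<^sup>+e. f e (Y x) \<partial>\<mu>) ^ card S"
      using nn_integral_PiM_prod_iid[OF \<mu> assms(1) \<open>S \<subseteq> I\<close> f_Y] by (simp add: h_def)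
  qed
  finally show ?thesis .
qed simp

lemma nn_integral_square_le_emeasure:
  assumes [measurable]: "f \<in> borel_measurable M" "A \<in> sets M"
    and vanish: "\<And>x. x \<in> space M \<Longrightarrow> x \<notin> A \<Longrightarrow> f x = 0"
  shows "(\<integral>\<^sup>+x. f x \<partial>M)\<^sup>2 \<le> (\<integral>\<^sup>+x. f x ^ 2 \<partial>M) * emeasure M A"
proof -
  have "(\<integral>\<^sup>+x. f x \<partial>M) = (\<integral>\<^sup>+x. f x * indicator A x \<partial>M)"
    using vanish by (intro nn_integral_cong) (auto simp: indicator_def)
  moreover have "(\<integral>\<^sup>+x. f x * indicator A x \<partial>M)\<^sup>2 \<le> (\<integral>\<^sup>+x. f x ^ 2 \<partial>M) * (\<integral>\<^sup>+x. (indicator A x)\<^sup>2 \<partial>M)"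
    by (rule Cauchy_Schwarz_nn_integral) auto
  moreover have "(\<integral>\<^sup>+x. (indicator A x)\<^sup>2 \<partial>M) = (\<integral>\<^sup>+x. indicator A x \<partial>M)"
    by (intro nn_integral_cong) (simp add: indicator_def)
  ultimately show ?thesis by simp
qed

lemma (in prob_space) cond_prob_mono:
  assumes "{x \<in> space M. P' x \<and> Q x} \<in> events"
    and "\<And>x. x \<in> space M \<Longrightarrow> P x \<Longrightarrow> Q x \<Longrightarrow> P' x"
  shows "\<P>(x in M. P x \<bar> Q x) \<le> \<P>(x in M. P' x \<bar> Q x)"
  unfolding cond_prob_def using assms by (intro divide_right_mono finite_measure_mono) auto

lemma square_div_le_div:
  fixes A B D :: real
  assumes "A\<^sup>2 \<le> B * D" "0 \<le> D"
  shows "(A / D)\<^sup>2 \<le> B / D"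
proof (cases "D = 0")
  case False
  with assms show ?thesis by (simp add: power_divide field_simps power2_eq_square)
qed simp

lemma (in prob_space) prob_all_measurements_gt:
  fixes X V :: "'i \<Rightarrow> 'a \<Rightarrow> real" and C :: real
  assumes I: "finite I" "indep_vars (\<lambda>_. borel) X I" "\<And>i. i \<in> I \<Longrightarrow> distr M borel (X i) = \<mu>"
    and indep: "indep_var (PiM I (\<lambda>_. borel)) (\<lambda>x. \<lambda>i\<in>I. X i x) (PiM J (\<lambda>_. borel)) (\<lambda>x. \<lambda>j\<in>J. V j x)"
    and "k \<in> J" "S \<subseteq> I"
  shows "ennreal \<P>(x in M. \<forall>i\<in>S. V k x * X i x > C \<and> V k x > C)
         = (\<integral>\<^sup>+x. (\<integral>\<^sup>+e. of_bool (V k x * e > C \<and> V k x > C) \<partial>\<mu>) ^ card S \<partial>M)"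
proof -
  have "finite S"
    using finite_subset[OF \<open>S \<subseteq> I\<close> I(1)] .
  have [measurable]: "X i \<in> borel_measurable M" if "i \<in> S" for i
    using I(2) \<open>S \<subseteq> I\<close> that by (auto simp: indep_vars_def)
  have "(\<lambda>x. \<lambda>j\<in>J. V j x) \<in> measurable M (PiM J (\<lambda>_. borel))"
    using indep_var_rv2[OF indep] .
  from measurable_compose[OF this measurable_component_singleton[OF \<open>k \<in> J\<close>]]
  have [measurable]: "V k \<in> borel_measurable M"
    using \<open>k \<in> J\<close> by simp
  have "{x \<in> space M. \<forall>i\<in>S. V k x * X i x > C \<and> V k x > C} \<in> events"
    using \<open>finite S\<close> by measurable
  then have "ennreal \<P>(x in M. \<forall>i\<in>S. V k x * X i x > C \<and> V k x > C)
      = (\<integral>\<^sup>+x. (\<Prod>i\<in>S. of_bool (V k x * X i x > C \<and> V k x > C)) \<partial>M)"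
    using \<open>finite S\<close>
    by (auto simp: emeasure_eq_measure[symmetric] nn_integral_indicator[symmetric]
        indicator_def intro!: nn_integral_cong prod.neutral prod_zero)
  also have "\<dots> = (\<integral>\<^sup>+x. (\<integral>\<^sup>+e. of_bool (V k x * e > C \<and> V k x > C) \<partial>\<mu>) ^ card S \<partial>M)"
    using nn_integral_prod_iid_indep[OF I indep _ \<open>S \<subseteq> I\<close>,
        of "\<lambda>e v. of_bool (v k * e > C \<and> v k > C)"] \<open>k \<in> J\<close>
    by simp
  finally show ?thesis .
qed

lemma (in prob_space) cond_prob_square_le_two_iid_measurements:
  fixes X V :: "'i \<Rightarrow> 'a \<Rightarrow> real" and C :: real
  assumes I: "finite I" "indep_vars (\<lambda>_. borel) X I" "\<And>i. i \<in> I \<Longrightarrow> distr M borel (X i) = \<mu>"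
    and indep: "indep_var (PiM I (\<lambda>_. borel)) (\<lambda>x. \<lambda>i\<in>I. X i x) (PiM J (\<lambda>_. borel)) (\<lambda>x. \<lambda>j\<in>J. V j x)"
    and "k \<in> J" "a \<in> I" "b \<in> I" "a \<noteq> b"
  shows "\<P>(x in M. V k x * X a x > C \<bar> V k x > C)\<^sup>2
         \<le> \<P>(x in M. V k x * X a x > C \<and> V k x * X b x > C \<bar> V k x > C)"
proof -
  have "(\<lambda>x. \<lambda>j\<in>J. V j x) \<in> measurable M (PiM J (\<lambda>_. borel))"
    using indep_var_rv2[OF indep] .
  from measurable_compose[OF this measurable_component_singleton[OF \<open>k \<in> J\<close>]]
  have [measurable]: "V k \<in> borel_measurable M"
    using \<open>k \<in> J\<close> by simp
  interpret \<mu>: prob_space \<mu>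
    using I(2,3) \<open>a \<in> I\<close> by (auto simp: indep_vars_def intro!: prob_space_distr)
  have sets_\<mu>: "sets \<mu> = sets borel"
    using I(3)[OF \<open>a \<in> I\<close>, symmetric] by simp
  define p where "p y = (\<integral>\<^sup>+e. of_bool (y * e > C \<and> y > C) \<partial>\<mu>)" for y
  have [measurable]: "p \<in> borel_measurable borel"
  proof -
    have "(\<lambda>(y, e). of_bool (y * e > C \<and> y > C) :: ennreal) \<in> borel_measurable (borel \<Otimes>\<^sub>M \<mu>)"
      unfolding measurable_cong_sets[OF sets_pair_measure_cong[OF refl sets_\<mu>] refl] by measurable
    then show ?thesis
      unfolding p_def by (rule \<mu>.borel_measurable_nn_integral[of "\<lambda>y e. of_bool (y * e > C \<and> y > C)", simplified])
  qed
  define A where "A = \<P>(x in M. V k x * X a x > C \<and> V k x > C)"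
  define B where "B = \<P>(x in M. (V k x * X a x > C \<and> V k x * X b x > C) \<and> V k x > C)"
  define D where "D = \<P>(x in M. V k x > C)"
  have "ennreal A = (\<integral>\<^sup>+x. p (V k x) \<partial>M)"
    using prob_all_measurements_gt[OF I indep \<open>k \<in> J\<close>, of "{a}" C] \<open>a \<in> I\<close>
    by (simp add: A_def p_def)
  moreover have "ennreal B = (\<integral>\<^sup>+x. p (V k x) ^ 2 \<partial>M)"
    using prob_all_measurements_gt[OF I indep \<open>k \<in> J\<close>, of "{a, b}" C] \<open>a \<in> I\<close> \<open>b \<in> I\<close> \<open>a \<noteq> b\<close>
    by (simp add: B_def p_def conj_ac power2_eq_square)
  moreover have "p y = 0" if "\<not> y > C" for y
    using that by (simp add: p_def)
  ultimately have "ennreal A ^ 2 \<le> ennreal B * ennreal D"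
    using nn_integral_square_le_emeasure[of "\<lambda>x. p (V k x)" M "{x \<in> space M. V k x > C}"]
    by (simp add: D_def emeasure_eq_measure)
  moreover have "0 \<le> A" "0 \<le> B" "0 \<le> D"
    by (simp_all add: A_def B_def D_def)
  ultimately have "A ^ 2 \<le> B * D"
    by (simp add: ennreal_power ennreal_mult[symmetric])
  then show ?thesis
    using \<open>0 \<le> D\<close> unfolding cond_prob_def A_def B_def D_def by (rule square_div_le_div)
qed

lemma mult_sum_gt_of_member_mult_gt:
  fixes v :: "'i \<Rightarrow> real"
  assumes "finite J" "k \<in> J" "\<And>j. j \<in> J \<Longrightarrow> 0 \<le> v j" "0 \<le> C" "v k * e > C"
  shows "e * (\<Sum>j\<in>J. v j) > C"
proof -
  have "0 < v k * e"
    using assms(4,5) by linarith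
  then have "e > 0"
    using assms(3)[OF \<open>k \<in> J\<close>] by (auto simp: zero_less_mult_iff)
  moreover have "v k \<le> (\<Sum>j\<in>J. v j)"
    using assms(1-3) by (intro member_le_sum) auto
  ultimately have "e * v k \<le> e * (\<Sum>j\<in>J. v j)"
    by simp
  then show ?thesis
    using assms(5) mult.commute[of "v k" e] by linarith
qed

theorem mainTheorem6:
  fixes M :: "'a measure" and V eps :: "nat \<Rightarrow> 'a \<Rightarrow> real" and C :: real and K k :: nat
  assumes "prob_space M"
    and "C > 0" and "K \<ge> 2" and "k < K"
    and "\<forall>j<K. V j \<in> borel_measurable M"
    and "\<forall>j<K. \<forall>x\<in>space M. V j x \<ge> 0"
    and "prob_space.indep_vars M (\<lambda>_. borel) eps {..K}"
    and "\<forall>i\<le>K. distr M borel (eps i) = distr M borel (eps 0)"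
    and "distr M borel (eps 0) = distr M borel (\<lambda>x. inverse (eps 0 x))"
    and "prob_space.indep_var M
           (PiM {..K} (\<lambda>_. borel)) (\<lambda>x. restrict (\<lambda>i. eps i x) {..K})
           (PiM {..<K} (\<lambda>_. borel)) (\<lambda>x. restrict (\<lambda>j. V j x) {..<K})"
  shows "(sens_ind M V eps C k)\<^sup>2 \<le> sens_mp M V eps C K k
         \<and> sens_mp M V eps C K k \<le> sens_ind M V eps C k"
proof -
  interpret prob_space M by fact
  have [measurable]: "(\<lambda>x. \<Sum>j<K. V j x) \<in> borel_measurable M" "V k \<in> borel_measurable M"
    using assms(4,5) by (auto intro!: borel_measurable_sum)
  have [measurable]: "eps k \<in> borel_measurable M" "eps K \<in> borel_measurable M"
    using assms(4,7) by (auto simp: indep_vars_def)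
  have same_distr: "\<And>i. i \<in> {..K} \<Longrightarrow> distr M borel (eps i) = distr M borel (eps 0)"
    using assms(8) atMost_iff by blast
  have "k \<in> {..<K}" "k \<in> {..K}" "K \<in> {..K}" "k \<noteq> K"
    using assms(4) by auto
  have "(sens_ind M V eps C k)\<^sup>2 \<le> \<P>(x in M. V k x * eps k x > C \<and> V k x * eps K x > C \<bar> V k x > C)"
    unfolding sens_ind_def
    by (rule cond_prob_square_le_two_iid_measurements[OF finite_atMost assms(7) same_distr assms(10)
          \<open>k \<in> {..<K}\<close> \<open>k \<in> {..K}\<close> \<open>K \<in> {..K}\<close> \<open>k \<noteq> K\<close>])
  also have "\<dots> \<le> sens_mp M V eps C K k"
    unfolding sens_mp_def using assms(2,4,6)
    by (intro cond_prob_mono) (auto intro!: mult_sum_gt_of_member_mult_gt)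
  moreover have "sens_mp M V eps C K k \<le> sens_ind M V eps C k"
    unfolding sens_mp_def sens_ind_def by (rule cond_prob_mono) auto
  ultimately show ?thesis by simp
qed

end
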